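(* In the four-player team game of dominoes described in the context, the following hold for games that end in a tranca: (a) the minimum, over all such games, of the number of tiles on the board at the end of the game is $10$; (b) the minimum, over all such games, of the total number of pips on the tiles of the board at the end of the game is $42$.
   Context: Domino tiles: the set of tiles consists of the 28 unordered pairs $[a,b]=[b,a]$ with $a,b\in\{0,1,\dots,6\}$; the number of points (pips) of $[a,b]$ is $a+b$. Four players, numbered 1 to 4, play; players 1 and 3 form one team and players 2 and 4 the other. The 28 tiles are dealt, 7 to each player (the initial hands). Players take turns in cyclic order $1,2,3,4,1,\dots$. The starting player places any one of their tiles on the table, forming a line of tiles (the board) with two open ends. On each subsequent turn, the player whose turn it is must, if they hold a tile containing a number equal to the number shown at one of the two open ends, place such a tile at that end (with equal numbers adjacent), the other number of the tile becoming the new open end; if they hold no such tile, they pass. A game ends either when a player places their last tile, or in a tranca (blocked game): a position in which no player holds a tile that can be placed. *)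

theory Defs
  imports Main
begin

text \<open>A tile [a,b] is represented in normal form (a,b) with a \<le> b.
  Players are numbered 1..4; teams {1,3} and {2,4} play no role in the statement.\<close>

type_synonym tile = "nat \<times> nat"

definition all_tiles :: "tile set" where
  "all_tiles = {(a, b). a \<le> b \<and> b \<le> 6}"

fun norm_tile :: "nat \<times> nat \<Rightarrow> tile" where
  "norm_tile (x, y) = (min x y, max x y)"

definition players :: "nat set" where
  "players = {1, 2, 3, 4}"

definition next_player :: "nat \<Rightarrow> nat" where
  "next_player p = p mod 4 + 1"

definition valid_deal :: "(nat \<Rightarrow> tile set) \<Rightarrow> bool" where
  "valid_deal h \<longleftrightarrow>
     (\<forall>p\<in>players. h p \<subseteq> all_tiles \<and> card (h p) = 7) \<and>
     (\<forall>p\<in>players. \<forall>q\<in>players. p \<noteq> q \<longrightarrow> h p \<inter> h q = {})"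

text \<open>The board is a list of oriented tiles (x,y), read left to right, with
  equal numbers adjacent; its open ends are the first number of the first tile
  and the second number of the last tile.\<close>
record state =
  hands :: "nat \<Rightarrow> tile set"
  board :: "(nat \<times> nat) list"
  turn :: nat

definition lend :: "state \<Rightarrow> nat" where
  "lend s = fst (hd (board s))"

definition rend :: "state \<Rightarrow> nat" where
  "rend s = snd (last (board s))"

definition matches :: "tile \<Rightarrow> nat \<Rightarrow> bool" where
  "matches t n \<longleftrightarrow> fst t = n \<or> snd t = n"

definition can_play :: "state \<Rightarrow> nat \<Rightarrow> bool" where
  "can_play s p \<longleftrightarrow>
     (if board s = [] then hands s p \<noteq> {}
      else (\<exists>t\<in>hands s p. matches t (lend s) \<or> matches t (rend s)))"

definition live :: "state \<Rightarrow> bool" where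
  "live s \<longleftrightarrow> (\<forall>p\<in>players. hands s p \<noteq> {})"

definition remove_tile :: "state \<Rightarrow> tile \<Rightarrow> nat \<Rightarrow> tile set" where
  "remove_tile s t = (hands s)(turn s := hands s (turn s) - {t})"

inductive step :: "state \<Rightarrow> state \<Rightarrow> bool" where
  start: "\<lbrakk> live s; board s = []; norm_tile (x, y) \<in> hands s (turn s) \<rbrakk> \<Longrightarrow>
     step s \<lparr> hands = remove_tile s (norm_tile (x, y)), board = [(x, y)],
              turn = next_player (turn s) \<rparr>"
| left: "\<lbrakk> live s; board s \<noteq> []; norm_tile (x, lend s) \<in> hands s (turn s) \<rbrakk> \<Longrightarrow>
     step s \<lparr> hands = remove_tile s (norm_tile (x, lend s)), board = (x, lend s) # board s,
              turn = next_player (turn s) \<rparr>"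
| right: "\<lbrakk> live s; board s \<noteq> []; norm_tile (rend s, x) \<in> hands s (turn s) \<rbrakk> \<Longrightarrow>
     step s \<lparr> hands = remove_tile s (norm_tile (rend s, x)), board = board s @ [(rend s, x)],
              turn = next_player (turn s) \<rparr>"
| pass: "\<lbrakk> live s; \<not> can_play s (turn s) \<rbrakk> \<Longrightarrow>
     step s (s\<lparr> turn := next_player (turn s) \<rparr>)"

definition initial :: "(nat \<Rightarrow> tile set) \<Rightarrow> nat \<Rightarrow> state" where
  "initial h p = \<lparr> hands = h, board = [], turn = p \<rparr>"

definition tranca :: "state \<Rightarrow> bool" where
  "tranca s \<longleftrightarrow> board s \<noteq> [] \<and> (\<forall>p\<in>players. \<not> can_play s p)"

text \<open>Final positions of games (from any valid deal and any starting player)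
  that end in a tranca (and not by a player placing their last tile).\<close>
definition tranca_end :: "state \<Rightarrow> bool" where
  "tranca_end s \<longleftrightarrow>
     (\<exists>h p. valid_deal h \<and> p \<in> players \<and> step\<^sup>*\<^sup>* (initial h p) s) \<and>
     tranca s \<and> live s"

definition board_pips :: "state \<Rightarrow> nat" where
  "board_pips s = sum_list (map (\<lambda>(x, y). x + y) (board s))"

end

theory Submission
  imports Defs
begin

(* Along any game, the board is a line of distinct tiles and every tile is either on the board
   or in some hand. In a tranca nobody holds a tile showing the left open end a, so all seven
   tiles carrying a are on the board, and a occurs 8 times among the halves of the board.
   Along a line every number occurs an even number of times once the two open ends are counted,
   so the right end is a as well, and every other number x occurs at least twice, because [a,x]
   is on the board. Hence the board has at least 8 + 6 * 2 = 20 halves, i.e. 10 tiles, and at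
   least 8a + 2(21 - a) = 42 + 6a pips. Both bounds are attained by a game that opens with [0,0]
   and closes the 0 at both ends after ten moves. *)

definition tile_list :: "tile list" where
  "tile_list = [(0,0),(0,1),(0,2),(0,3),(0,4),(0,5),(0,6),(1,1),(1,2),(1,3),(1,4),(1,5),(1,6),
    (2,2),(2,3),(2,4),(2,5),(2,6),(3,3),(3,4),(3,5),(3,6),(4,4),(4,5),(4,6),(5,5),(5,6),(6,6)]"

lemma set_tile_list: "set tile_list = all_tiles"
proof
  show "set tile_list \<subseteq> all_tiles" by (simp add: tile_list_def all_tiles_def)
  show "all_tiles \<subseteq> set tile_list"
  proof
    fix t assume "t \<in> all_tiles"
    then obtain a b where t: "t = (a, b)" "a \<le> b" "b \<le> 6" by (auto simp: all_tiles_def)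
    then have "a \<in> {0, 1, 2, 3, 4, 5, 6}" "b \<in> {0, 1, 2, 3, 4, 5, 6}" by auto
    with t show "t \<in> set tile_list"
      by (elim insertE emptyE) (simp_all add: tile_list_def)
  qed
qed

lemma distinct_tile_list: "distinct tile_list"
  by (simp add: tile_list_def)

lemma finite_all_tiles: "finite all_tiles"
  by (simp flip: set_tile_list)

lemma card_all_tiles: "card all_tiles = 28"
  by (simp flip: set_tile_list add: distinct_card[OF distinct_tile_list]) (simp add: tile_list_def)

definition count_tile :: "'a \<Rightarrow> 'a \<times> 'a \<Rightarrow> nat" where
  "count_tile n t = count_list [fst t, snd t] n"

lemma count_tile_norm_tile: "count_tile n (norm_tile t) = count_tile n t"
  by (cases t) (simp add: count_tile_def min_def max_def)

lemma sum_count_tile_all_tiles: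
  assumes "a \<le> 6"
  shows "(\<Sum>t\<in>all_tiles. count_tile a t) = 8"
proof -
  have "(\<Sum>t\<in>all_tiles. count_tile a t) = sum_list (map (count_tile a) tile_list)"
    by (simp flip: set_tile_list add: sum.distinct_set_conv_list[OF distinct_tile_list])
  moreover have "a \<in> {0, 1, 2, 3, 4, 5, 6}"
    using assms by auto
  ultimately show ?thesis
    by (elim insertE) (simp_all add: tile_list_def count_tile_def)
qed

definition halves :: "('a \<times> 'a) list \<Rightarrow> 'a list" where
  "halves b = concat (map (\<lambda>(x, y). [x, y]) b)"

lemma halves_simps [simp]:
  "halves [] = []"
  "halves ((x, y) # b) = x # y # halves b"
  by (simp_all add: halves_def)

lemma length_halves: "length (halves b) = 2 * length b"
  by (induction b) auto

lemma sum_list_halves: "sum_list (halves b) = sum_list (map (\<lambda>(x, y). x + y) b)"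
  by (induction b) (auto simp: add.assoc)

lemma count_list_halves: "count_list (halves b) n = sum_list (map (count_tile n) b)"
  by (induction b) (auto simp: count_tile_def)

definition linked :: "('a \<times> 'a) list \<Rightarrow> bool" where
  "linked b \<longleftrightarrow> successively (\<lambda>u v. snd u = fst v) b"

lemma linked_even_count_list_halves:
  assumes "linked b" "b \<noteq> []"
  shows "even (count_list (halves b) n + of_bool (fst (hd b) = n) + of_bool (snd (last b) = n))"
  using assms
proof (induction b rule: induct_list012)
  case (3 x y zs)
  then have "snd x = fst y" "linked (y # zs)"
    by (auto simp: linked_def)
  then have "even (count_list (halves (y # zs)) n + of_bool (fst y = n)
      + of_bool (snd (last (y # zs)) = n))"
    using "3.IH"(2) by simp
  with \<open>snd x = fst y\<close> show ?case
    by (cases x) auto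
qed (auto simp: linked_def)

lemma count_list_halves_distinct:
  assumes "distinct (map norm_tile b)"
  shows "count_list (halves b) n = (\<Sum>t\<in>norm_tile ` set b. count_tile n t)"
proof -
  have "count_list (halves b) n = sum_list (map (count_tile n) (map norm_tile b))"
    by (simp add: count_list_halves comp_def count_tile_norm_tile)
  also have "\<dots> = (\<Sum>t\<in>norm_tile ` set b. count_tile n t)"
    using sum_list_distinct_conv_sum_set[OF assms] by simp
  finally show ?thesis .
qed

definition placed :: "state \<Rightarrow> tile set" where
  "placed s = norm_tile ` set (board s)"

definition consistent :: "state \<Rightarrow> bool" where
  "consistent s \<longleftrightarrow> turn s \<in> players \<and>
     (\<forall>p\<in>players. hands s p \<subseteq> all_tiles) \<and>
     (\<forall>p\<in>players. \<forall>q\<in>players. p \<noteq> q \<longrightarrow> hands s p \<inter> hands s q = {}) \<and>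
     (\<forall>p\<in>players. hands s p \<inter> placed s = {}) \<and>
     placed s \<subseteq> all_tiles \<and>
     all_tiles \<subseteq> (\<Union>p\<in>players. hands s p) \<union> placed s \<and>
     distinct (map norm_tile (board s)) \<and>
     linked (board s)"

lemma next_player_in_players: "next_player p \<in> players"
  by (auto simp: next_player_def players_def)

lemma valid_deal_Union:
  assumes "valid_deal h"
  shows "(\<Union>p\<in>players. h p) = all_tiles"
proof (rule card_subset_eq[OF finite_all_tiles])
  show "(\<Union>p\<in>players. h p) \<subseteq> all_tiles"
    using assms by (auto simp: valid_deal_def)
  have "finite (h p)" if "p \<in> players" for p
    using assms that card.infinite by (fastforce simp: valid_deal_def)
  then have "card (\<Union>p\<in>players. h p) = (\<Sum>p\<in>players. card (h p))"
    using assms by (intro card_UN_disjoint) (auto simp: valid_deal_def players_def)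
  also have "\<dots> = card all_tiles"
    using assms by (simp add: valid_deal_def players_def card_all_tiles)
  finally show "card (\<Union>p\<in>players. h p) = card all_tiles" .
qed

lemma consistent_initial: "valid_deal h \<Longrightarrow> p \<in> players \<Longrightarrow> consistent (initial h p)"
  using valid_deal_Union[of h]
  by (auto simp: consistent_def initial_def valid_deal_def placed_def linked_def)

lemma consistent_place:
  assumes s: "consistent s" and t: "t \<in> hands s (turn s)"
    and placed: "norm_tile ` set b = insert t (placed s)"
    and distinct: "t \<notin> placed s \<Longrightarrow> distinct (map norm_tile b)"
    and linked: "linked b"
  shows "consistent \<lparr>hands = (hands s)(turn s := hands s (turn s) - {t}), board = b,
    turn = next_player (turn s)\<rparr>" (is "consistent ?s")
proof -
  have "t \<notin> placed s" "t \<in> all_tiles"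
    using s t by (auto simp: consistent_def)
  have others: "t \<notin> hands s p" if "p \<in> players" "p \<noteq> turn s" for p
    using s t that unfolding consistent_def by blast
  have shrink: "hands ?s p \<subseteq> hands s p" for p
    by auto
  have placed_s: "placed ?s = insert t (placed s)"
    using placed by (simp add: placed_def)
  have "\<forall>p\<in>players. hands ?s p \<subseteq> all_tiles"
    "\<forall>p\<in>players. \<forall>q\<in>players. p \<noteq> q \<longrightarrow> hands ?s p \<inter> hands ?s q = {}"
    "placed ?s \<subseteq> all_tiles"
    using s shrink \<open>t \<in> all_tiles\<close> unfolding consistent_def placed_s by blast+
  moreover have "\<forall>p\<in>players. hands ?s p \<inter> placed ?s = {}"
    using s others unfolding placed_s consistent_def by auto
  moreover have "all_tiles \<subseteq> (\<Union>p\<in>players. hands ?s p) \<union> placed ?s"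
    using s unfolding placed_s consistent_def by auto
  ultimately show ?thesis
    using distinct[OF \<open>t \<notin> placed s\<close>] linked
    by (simp add: consistent_def next_player_in_players)
qed

lemma consistent_step: "step s s' \<Longrightarrow> consistent s \<Longrightarrow> consistent s'"
proof (induction rule: step.induct)
  case (start s x y)
  then show ?case
    unfolding remove_tile_def by (intro consistent_place) (simp_all add: placed_def linked_def)
next
  case (left s x)
  have "linked ((x, lend s) # board s)"
    using left by (cases "board s") (simp_all add: consistent_def linked_def lend_def)
  with left show ?case
    unfolding remove_tile_def by (intro consistent_place) (simp_all add: placed_def consistent_def)
next
  case (right s x)
  have "linked (board s @ [(rend s, x)])"
    using right by (simp add: consistent_def linked_def rend_def successively_append_iff)
  with right show ?case
    unfolding remove_tile_def by (intro consistent_place) (simp_all add: placed_def consistent_def)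
next
  case (pass s)
  then show ?case
    by (simp add: consistent_def placed_def next_player_in_players)
qed

lemma consistent_reachable: "step\<^sup>*\<^sup>* s s' \<Longrightarrow> consistent s \<Longrightarrow> consistent s'"
  by (induction rule: rtranclp_induct) (auto intro: consistent_step)

lemma tranca_end_consistent: "tranca_end s \<Longrightarrow> consistent s"
  unfolding tranca_end_def by (blast intro: consistent_reachable consistent_initial)

lemma set_halves_board:
  assumes "consistent s"
  shows "set (halves (board s)) \<subseteq> {..6}"
proof
  fix n assume "n \<in> set (halves (board s))"
  then obtain x y where xy: "(x, y) \<in> set (board s)" and n: "n = x \<or> n = y"
    by (auto simp: halves_def)
  have "norm_tile (x, y) \<in> placed s"
    unfolding placed_def using xy by (rule imageI)
  then have "norm_tile (x, y) \<in> all_tiles"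
    using assms unfolding consistent_def by blast
  with n show "n \<in> {..6}"
    by (auto simp: all_tiles_def)
qed

lemma lend_le_6:
  assumes "consistent s" "board s \<noteq> []"
  shows "lend s \<le> 6"
  using set_halves_board[OF assms(1)] assms(2) by (cases "board s") (auto simp: lend_def)

lemma tranca_matching_tile_placed:
  assumes "consistent s" "tranca s" "t \<in> all_tiles" "matches t (lend s)"
  shows "t \<in> placed s"
proof (rule ccontr)
  assume "t \<notin> placed s"
  then obtain p where p: "p \<in> players" "t \<in> hands s p"
    using assms(1,3) unfolding consistent_def by blast
  with assms(2,4) have "can_play s p"
    by (auto simp: can_play_def tranca_def)
  with assms(2) p(1) show False
    by (simp add: tranca_def)
qed

lemma tranca_count_lend:
  assumes "consistent s" "tranca s"
  shows "count_list (halves (board s)) (lend s) = 8"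
proof -
  have "placed s \<subseteq> all_tiles" "distinct (map norm_tile (board s))"
    using assms(1) by (simp_all add: consistent_def)
  have "count_list (halves (board s)) (lend s) = (\<Sum>t\<in>placed s. count_tile (lend s) t)"
    using count_list_halves_distinct[OF \<open>distinct _\<close>] by (simp add: placed_def)
  also have "\<dots> = (\<Sum>t\<in>all_tiles. count_tile (lend s) t)"
  proof (rule sum.mono_neutral_left[OF finite_all_tiles \<open>placed s \<subseteq> all_tiles\<close>])
    show "\<forall>t\<in>all_tiles - placed s. count_tile (lend s) t = 0"
      using tranca_matching_tile_placed[OF assms] by (auto simp: count_tile_def matches_def)
  qed
  also have "\<dots> = 8"
    using assms by (simp add: sum_count_tile_all_tiles lend_le_6 tranca_def)
  finally show ?thesis .
qed

lemma tranca_even_count: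
  assumes "consistent s" "tranca s"
  shows "even (count_list (halves (board s)) n + of_bool (lend s = n) + of_bool (rend s = n))"
  using linked_even_count_list_halves[of "board s" n] assms
  by (simp add: consistent_def tranca_def lend_def rend_def)

lemma tranca_rend_eq_lend:
  assumes "consistent s" "tranca s"
  shows "rend s = lend s"
  using tranca_even_count[OF assms, of "lend s"] tranca_count_lend[OF assms]
  by (auto split: if_splits)

lemma tranca_count_ge_2:
  assumes "consistent s" "tranca s" "n \<le> 6" "n \<noteq> lend s"
  shows "2 \<le> count_list (halves (board s)) n"
proof -
  have "lend s \<le> 6"
    using assms(1,2) by (simp add: lend_le_6 tranca_def)
  with assms(3) have "norm_tile (lend s, n) \<in> all_tiles"
    by (auto simp: all_tiles_def)
  moreover have "matches (norm_tile (lend s, n)) (lend s)"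
    by (auto simp: matches_def min_def max_def)
  ultimately have "norm_tile (lend s, n) \<in> placed s"
    by (rule tranca_matching_tile_placed[OF assms(1,2)])
  moreover have "distinct (map norm_tile (board s))"
    using assms(1) by (simp add: consistent_def)
  ultimately have "count_tile n (norm_tile (lend s, n)) \<le> count_list (halves (board s)) n"
    by (simp add: count_list_halves_distinct placed_def member_le_sum)
  then have "1 \<le> count_list (halves (board s)) n"
    by (auto simp: count_tile_def min_def max_def split: if_splits)
  moreover have "even (count_list (halves (board s)) n)"
    using tranca_even_count[OF assms(1,2), of n] tranca_rend_eq_lend[OF assms(1,2)] assms(4)
    by simp
  ultimately show ?thesis
    by presburger
qed

lemma tranca_count_ge:
  assumes "consistent s" "tranca s" "n \<le> 6"
  shows "2 + (if n = lend s then 6 else 0) \<le> count_list (halves (board s)) n"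
  using tranca_count_lend[OF assms(1,2)] tranca_count_ge_2[OF assms] by auto

lemma tranca_length_ge:
  assumes "consistent s" "tranca s"
  shows "10 \<le> length (board s)"
proof -
  have "lend s \<le> 6"
    using assms by (simp add: lend_le_6 tranca_def)
  then have "(20::nat) = (\<Sum>n\<le>6::nat. 2) + (\<Sum>n\<le>6. if n = lend s then 6 else 0)"
    by simp
  also have "\<dots> = (\<Sum>n\<le>6. 2 + (if n = lend s then 6 else 0))"
    by (rule sum.distrib[symmetric])
  also have "\<dots> \<le> (\<Sum>n\<le>6. count_list (halves (board s)) n)"
    by (intro sum_mono tranca_count_ge[OF assms]) simp
  also have "\<dots> = length (halves (board s))"
    using sum_list_map_eq_sum_count2[OF set_halves_board[OF assms(1)], of "\<lambda>_. 1"]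
    by (simp add: sum_list_triv)
  finally show ?thesis
    by (simp add: length_halves)
qed

lemma tranca_board_pips_ge:
  assumes "consistent s" "tranca s"
  shows "42 + 6 * lend s \<le> board_pips s"
proof -
  have "lend s \<le> 6"
    using assms by (simp add: lend_le_6 tranca_def)
  have "(\<Sum>n\<le>6::nat. 2 * n) = 42"
    by (simp add: numeral_eq_Suc)
  with \<open>lend s \<le> 6\<close>
  have "42 + 6 * lend s = (\<Sum>n\<le>6::nat. 2 * n) + (\<Sum>n\<le>6. if n = lend s then 6 * n else 0)"
    by simp
  also have "\<dots> = (\<Sum>n\<le>6. 2 * n + (if n = lend s then 6 * n else 0))"
    by (rule sum.distrib[symmetric])
  also have "\<dots> = (\<Sum>n\<le>6. n * (2 + (if n = lend s then 6 else 0)))"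
    by (rule sum.cong) auto
  also have "\<dots> \<le> (\<Sum>n\<le>6. n * count_list (halves (board s)) n)"
    by (intro sum_mono mult_le_mono2 tranca_count_ge[OF assms]) simp
  also have "\<dots> = sum_list (halves (board s))"
    using sum_list_map_eq_sum_count2[OF set_halves_board[OF assms(1)], of "\<lambda>n. n"]
    by (simp add: mult.commute)
  finally show ?thesis
    by (simp add: board_pips_def sum_list_halves)
qed

definition play_right :: "state \<Rightarrow> nat \<Rightarrow> state" where
  "play_right s x =
    \<lparr>hands = remove_tile s (norm_tile (rend s, x)), board = board s @ [(rend s, x)],
     turn = next_player (turn s)\<rparr>"

fun legal_right :: "nat list \<Rightarrow> state \<Rightarrow> bool" where
  "legal_right [] s \<longleftrightarrow> True"
| "legal_right (x # xs) s \<longleftrightarrow>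
     live s \<and> board s \<noteq> [] \<and> norm_tile (rend s, x) \<in> hands s (turn s) \<and>
     legal_right xs (play_right s x)"

lemma legal_right_reachable: "legal_right xs s \<Longrightarrow> step\<^sup>*\<^sup>* s (foldl play_right s xs)"
proof (induction xs arbitrary: s)
  case (Cons x xs)
  then have "step s (play_right s x)"
    using step.right[of s x] by (simp add: play_right_def)
  with Cons show ?case
    by (auto intro: converse_rtranclp_into_rtranclp)
qed simp

definition tranca_deal :: "nat \<Rightarrow> tile set" where
  "tranca_deal p =
    (if p = 1 then {(0,0), (0,3), (5,6), (1,1), (1,3), (1,4), (1,5)}
     else if p = 2 then {(0,1), (3,4), (0,6), (1,6), (2,2), (2,3), (2,4)}
     else if p = 3 then {(1,2), (0,4), (2,5), (2,6), (3,3), (3,5), (3,6)}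
     else if p = 4 then {(0,2), (0,5), (4,4), (4,5), (4,6), (5,5), (6,6)}
     else {})"

lemma valid_tranca_deal: "valid_deal tranca_deal"
  by (simp add: valid_deal_def players_def tranca_deal_def all_tiles_def)

definition tranca_opening :: state where
  "tranca_opening =
    \<lparr>hands = remove_tile (initial tranca_deal 1) (0, 0), board = [(0, 0)], turn = 2\<rparr>"

definition tranca_game :: state where
  "tranca_game = foldl play_right tranca_opening [1, 2, 0, 3, 4, 0, 5, 6, 0]"

lemma tranca_game_reachable: "step\<^sup>*\<^sup>* (initial tranca_deal 1) tranca_game"
proof -
  have "step (initial tranca_deal 1) tranca_opening"
    using step.start[of "initial tranca_deal 1" 0 0]
    by (simp add: tranca_opening_def initial_def live_def players_def tranca_deal_def next_player_def
        numeral_2_eq_2)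
  moreover have "legal_right [1, 2, 0, 3, 4, 0, 5, 6, 0] tranca_opening"
    by (simp add: tranca_opening_def play_right_def remove_tile_def initial_def tranca_deal_def
        live_def players_def rend_def next_player_def)
  ultimately show ?thesis
    unfolding tranca_game_def by (rule converse_rtranclp_into_rtranclp[OF _ legal_right_reachable])
qed

lemma board_tranca_game:
  "board tranca_game = [(0,0), (0,1), (1,2), (2,0), (0,3), (3,4), (4,0), (0,5), (5,6), (6,0)]"
  by (simp add: tranca_game_def tranca_opening_def play_right_def rend_def)

lemma tranca_live_tranca_game: "tranca tranca_game \<and> live tranca_game"
  by (simp add: tranca_game_def tranca_opening_def play_right_def remove_tile_def initial_def
      tranca_deal_def rend_def next_player_def tranca_def can_play_def lend_def matches_def live_def
      players_def)

lemma tranca_end_tranca_game: "tranca_end tranca_game"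
  unfolding tranca_end_def using valid_tranca_deal tranca_game_reachable tranca_live_tranca_game
  by (auto simp: players_def)

theorem mainTheorem3:
  shows "((\<exists>s. tranca_end s \<and> length (board s) = 10) \<and>
          (\<forall>s. tranca_end s \<longrightarrow> 10 \<le> length (board s))) \<and>
         ((\<exists>s. tranca_end s \<and> board_pips s = 42) \<and>
          (\<forall>s. tranca_end s \<longrightarrow> 42 \<le> board_pips s))"
proof -
  have "length (board tranca_game) = 10" "board_pips tranca_game = 42"
    by (simp_all add: board_tranca_game board_pips_def)
  moreover have "10 \<le> length (board s)" "42 \<le> board_pips s" if "tranca_end s" for s
    using tranca_length_ge tranca_board_pips_ge tranca_end_consistent[OF that] that
    by (fastforce simp: tranca_end_def)+
  ultimately show ?thesis
    using tranca_end_tranca_game by blast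
qed

end
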